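(* Let $C(\cdot,t)$, $t\in[0,T)$, be a smooth family of closed curves in $\mathbb{R}^2$ with centro-affine arc-length $\xi$ and centro-affine curvature $\varphi$, and suppose $\varphi$ satisfies $$\frac{\partial\varphi}{\partial t}=\frac12\varphi_{\xi\xi}-\frac12\varphi^3+2\varphi$$ for $t\in[0,T)$. Then $\varphi$ is bounded on $[0,T)$; more precisely, $$\min\{-2,\varphi_{\min}(0)\}\le\varphi(p,t)\le\max\{2,\varphi_{\max}(0)\},$$ where $\varphi_{\max}(t)=\sup_p\varphi(p,t)$ and $\varphi_{\min}(t)=\inf_p\varphi(p,t)$.
   Context: For $u,v\in\mathbb{R}^2$, $[u,v]$ denotes the determinant of the matrix with columns $u,v$. Each curve $C(\cdot,t):S^1\to\mathbb{R}^2$ is smooth, closed, with $[C,C_p]\neq0$, $[C_p,C_{pp}]\neq0$ (then $[C_p,C_{pp}]/[C,C_p]>0$). The centro-affine metric is $g=\sqrt{[C_p,C_{pp}]/[C,C_p]}$, centro-affine arc-length $\xi(p)=\int_{p_0}^p g\,dp$ (so $\partial_\xi=g^{-1}\partial_p$), and centro-affine curvature $\varphi=[C_{\xi\xi},C]/[C_\xi,C]$. *)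

theory Defs
  imports "HOL-Analysis.Analysis"
begin

text \<open>A family of planar curves is given by its component functions
  x, y :: real \<Rightarrow> real \<Rightarrow> real, evaluated as x p t, y p t
  (p = curve parameter, t = time). Closedness: period 1 in p (S^1 = R/Z).\<close>

text \<open>Smoothness on R \<times> I: all iterated partial derivatives (in p, and in t
  one-sidedly within I) exist and are continuous, i.e. C-infinity.\<close>
coinductive smooth_fam :: "real set \<Rightarrow> (real \<Rightarrow> real \<Rightarrow> real) \<Rightarrow> bool" for I where
  "\<lbrakk> continuous_on (UNIV \<times> I) (\<lambda>(p,t). f p t);
     \<forall>p t. t \<in> I \<longrightarrow> ((\<lambda>q. f q t) has_real_derivative fp p t) (at p);
     \<forall>p t. t \<in> I \<longrightarrow> ((\<lambda>s. f p s) has_real_derivative ft p t) (at t within I);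
     smooth_fam I fp; smooth_fam I ft \<rbrakk> \<Longrightarrow> smooth_fam I f"

definition dp :: "(real \<Rightarrow> real \<Rightarrow> real) \<Rightarrow> real \<Rightarrow> real \<Rightarrow> real" where
  "dp f p t = deriv (\<lambda>q. f q t) p"

definition dt :: "real \<Rightarrow> (real \<Rightarrow> real \<Rightarrow> real) \<Rightarrow> real \<Rightarrow> real \<Rightarrow> real" where
  "dt T f p t = vector_derivative (\<lambda>s. f p s) (at t within {0..<T})"

definition det2 :: "real \<Rightarrow> real \<Rightarrow> real \<Rightarrow> real \<Rightarrow> real" where
  "det2 u1 u2 v1 v2 = u1 * v2 - u2 * v1"

definition ca_metric :: "(real \<Rightarrow> real \<Rightarrow> real) \<Rightarrow> (real \<Rightarrow> real \<Rightarrow> real) \<Rightarrow> real \<Rightarrow> real \<Rightarrow> real" where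
  "ca_metric x y p t =
     sqrt (det2 (dp x p t) (dp y p t) (dp (dp x) p t) (dp (dp y) p t)
           / det2 (x p t) (y p t) (dp x p t) (dp y p t))"

definition dxi :: "(real \<Rightarrow> real \<Rightarrow> real) \<Rightarrow> (real \<Rightarrow> real \<Rightarrow> real) \<Rightarrow> (real \<Rightarrow> real \<Rightarrow> real) \<Rightarrow> real \<Rightarrow> real \<Rightarrow> real" where
  "dxi x y f p t = dp f p t / ca_metric x y p t"

definition ca_curv :: "(real \<Rightarrow> real \<Rightarrow> real) \<Rightarrow> (real \<Rightarrow> real \<Rightarrow> real) \<Rightarrow> real \<Rightarrow> real \<Rightarrow> real" where
  "ca_curv x y p t =
     det2 (dxi x y (dxi x y x) p t) (dxi x y (dxi x y y) p t) (x p t) (y p t)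
     / det2 (dxi x y x p t) (dxi x y y p t) (x p t) (y p t)"

end

theory Submission
  imports Defs
begin

(* The curvature phi is a smooth 1-periodic solution of the reaction-diffusion equation
   phi_t = phi_xixi / 2 + R(phi) with R(u) = 2 u - u^3 / 2, and R(u) has the sign of -u when
   |u| > 2. Suppose max phi(., t) exceeds c > max {2, phi_max(0)} and let ts be the first time
   the level c is reached, at a point ps. There phi(., ts) is maximal, so phi_p = 0 and
   phi_pp <= 0, hence phi_xixi = phi_pp / g^2 <= 0 and R(phi) < 0 force phi_t < 0, contradicting
   phi(ps, t) < c = phi(ps, ts) for t < ts. The lower bound is symmetric. Most of the work is
   to show that phi, built from x and y by differentiation, products, quotients and a square
   root, is again smooth, so that all these derivatives exist. *)

section \<open>Smooth families\<close>

lemma DERIV_inverse_fun_real: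
  "(f has_real_derivative d) (at x within S) \<Longrightarrow> f x \<noteq> 0 \<Longrightarrow>
   ((\<lambda>x. inverse (f x)) has_real_derivative (- 1) * d * (inverse (f x) * inverse (f x)))
     (at x within S)"
  by (erule DERIV_cong[OF DERIV_inverse_fun]) simp_all

text \<open>Isabelle's \<^const>\<open>sqrt\<close> is odd, \<open>sqrt (- x) = - sqrt x\<close>, so \<open>sqrt x / (2 * x)\<close> is its
  derivative on both sides of 0.\<close>

lemma DERIV_real_sqrt_nonzero:
  "x \<noteq> 0 \<Longrightarrow> (sqrt has_real_derivative sqrt x * inverse x * (1/2)) (at x)"
  by (rule DERIV_real_sqrt_generic) (auto simp: real_sqrt_minus[symmetric] field_simps)

lemma DERIV_real_sqrt_fun:
  "(f has_real_derivative d) (at x within S) \<Longrightarrow> f x \<noteq> 0 \<Longrightarrow>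
   ((\<lambda>x. sqrt (f x)) has_real_derivative d * sqrt (f x) * inverse (f x) * (1/2)) (at x within S)"
  by (rule DERIV_cong[OF DERIV_chain2[OF DERIV_real_sqrt_nonzero]]) (simp_all add: ac_simps)

definition has_partials ::
  "real set \<Rightarrow> (real \<Rightarrow> real \<Rightarrow> real) \<Rightarrow> (real \<Rightarrow> real \<Rightarrow> real) \<Rightarrow>
    (real \<Rightarrow> real \<Rightarrow> real) \<Rightarrow> bool"
  where "has_partials I f fp ft \<longleftrightarrow>
    (\<forall>p t. t \<in> I \<longrightarrow> ((\<lambda>q. f q t) has_real_derivative fp p t) (at p)
                 \<and> ((\<lambda>s. f p s) has_real_derivative ft p t) (at t within I))"

lemma has_partialsI:
  assumes "\<And>p t. t \<in> I \<Longrightarrow> ((\<lambda>q. f q t) has_real_derivative fp p t) (at p)"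
    and "\<And>p t. t \<in> I \<Longrightarrow> ((\<lambda>s. f p s) has_real_derivative ft p t) (at t within I)"
  shows "has_partials I f fp ft"
  using assms by (simp add: has_partials_def)

lemma has_partialsD:
  assumes "has_partials I f fp ft" "t \<in> I"
  shows "((\<lambda>q. f q t) has_real_derivative fp p t) (at p)"
    and "((\<lambda>s. f p s) has_real_derivative ft p t) (at t within I)"
  using assms by (simp_all add: has_partials_def)

lemma has_partials_const: "has_partials I (\<lambda>p t. c) (\<lambda>p t. 0) (\<lambda>p t. 0)"
  by (simp add: has_partials_def)

lemma has_partials_add:
  "has_partials I f fp ft \<Longrightarrow> has_partials I g gp gt \<Longrightarrow>
   has_partials I (\<lambda>p t. f p t + g p t) (\<lambda>p t. fp p t + gp p t) (\<lambda>p t. ft p t + gt p t)"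
  by (intro has_partialsI DERIV_add) (auto dest: has_partialsD)

lemma has_partials_mult:
  "has_partials I f fp ft \<Longrightarrow> has_partials I g gp gt \<Longrightarrow>
   has_partials I (\<lambda>p t. f p t * g p t)
     (\<lambda>p t. fp p t * g p t + gp p t * f p t) (\<lambda>p t. ft p t * g p t + gt p t * f p t)"
  by (intro has_partialsI DERIV_mult) (auto dest: has_partialsD)

text \<open>The partials are written with constants, products and inverses only, so that they stay
  in \<open>smooth_alg\<close> below.\<close>

lemma has_partials_inverse:
  assumes "has_partials I f fp ft" "\<And>p t. t \<in> I \<Longrightarrow> f p t \<noteq> 0"
  shows "has_partials I (\<lambda>p t. inverse (f p t))
     (\<lambda>p t. (- 1) * fp p t * (inverse (f p t) * inverse (f p t)))
     (\<lambda>p t. (- 1) * ft p t * (inverse (f p t) * inverse (f p t)))"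
  using assms by (intro has_partialsI DERIV_inverse_fun_real) (auto dest: has_partialsD)

lemma has_partials_sqrt:
  assumes "has_partials I f fp ft" "\<And>p t. t \<in> I \<Longrightarrow> f p t \<noteq> 0"
  shows "has_partials I (\<lambda>p t. sqrt (f p t))
     (\<lambda>p t. fp p t * sqrt (f p t) * inverse (f p t) * (1/2))
     (\<lambda>p t. ft p t * sqrt (f p t) * inverse (f p t) * (1/2))"
  using assms by (intro has_partialsI DERIV_real_sqrt_fun) (auto dest: has_partialsD)

lemma has_partials_cong:
  assumes "has_partials I f fp ft" "\<And>p t. t \<in> I \<Longrightarrow> g p t = f p t"
  shows "has_partials I g fp ft"
proof (rule has_partialsI)
  fix p t assume t: "t \<in> I"
  have "(\<lambda>q. g q t) = (\<lambda>q. f q t)" using assms(2)[OF t] by auto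
  then show "((\<lambda>q. g q t) has_real_derivative fp p t) (at p)"
    using has_partialsD(1)[OF assms(1) t] by simp
  show "((\<lambda>s. g p s) has_real_derivative ft p t) (at t within I)"
    using has_partialsD(2)[OF assms(1) t]
    by (rule has_field_derivative_transform_within[OF _ zero_less_one t]) (simp add: assms(2))
qed

lemma smooth_fam_continuous:
  "smooth_fam I f \<Longrightarrow> continuous_on (UNIV \<times> I) (\<lambda>(p, t). f p t)"
  by (erule smooth_fam.cases) simp

lemma smooth_fam_has_partials:
  "smooth_fam I f \<Longrightarrow> \<exists>fp ft. has_partials I f fp ft \<and> smooth_fam I fp \<and> smooth_fam I ft"
  by (erule smooth_fam.cases) (unfold has_partials_def; blast)

text \<open>Closure of the coinductive predicate \<^const>\<open>smooth_fam\<close> under algebraic operations is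
  proved by coinduction, after showing that the algebra generated by the smooth families is
  closed under taking partials.\<close>

inductive smooth_alg :: "real set \<Rightarrow> (real \<Rightarrow> real \<Rightarrow> real) \<Rightarrow> bool" for I where
  smooth: "smooth_fam I f \<Longrightarrow> smooth_alg I f"
| const: "smooth_alg I (\<lambda>p t. c)"
| add: "smooth_alg I f \<Longrightarrow> smooth_alg I g \<Longrightarrow> smooth_alg I (\<lambda>p t. f p t + g p t)"
| mult: "smooth_alg I f \<Longrightarrow> smooth_alg I g \<Longrightarrow> smooth_alg I (\<lambda>p t. f p t * g p t)"
| inverse: "smooth_alg I f \<Longrightarrow> (\<And>p t. t \<in> I \<Longrightarrow> f p t \<noteq> 0) \<Longrightarrow>
    smooth_alg I (\<lambda>p t. inverse (f p t))"
| sqrt: "smooth_alg I f \<Longrightarrow> (\<And>p t. t \<in> I \<Longrightarrow> f p t \<noteq> 0) \<Longrightarrow>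
    smooth_alg I (\<lambda>p t. sqrt (f p t))"

lemma smooth_alg_continuous:
  "smooth_alg I f \<Longrightarrow> continuous_on (UNIV \<times> I) (\<lambda>(p, t). f p t)"
  unfolding split_beta'
proof (induction rule: smooth_alg.induct)
  case (smooth f)
  then show ?case by (simp add: smooth_fam_continuous[unfolded split_beta'])
next
  case (const c)
  show ?case by (rule continuous_on_const)
next
  case (add f g)
  show ?case using add.IH by (rule continuous_on_add)
next
  case (mult f g)
  show ?case using mult.IH by (rule continuous_on_mult)
next
  case (inverse f)
  then show ?case by (intro continuous_on_inverse) auto
next
  case (sqrt f)
  show ?case using sqrt.IH by (rule continuous_on_real_sqrt)
qed

lemma smooth_alg_has_partials:
  "smooth_alg I f \<Longrightarrow> \<exists>fp ft. has_partials I f fp ft \<and> smooth_alg I fp \<and> smooth_alg I ft"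
proof (induction rule: smooth_alg.induct)
  case (smooth f)
  then show ?case by (blast dest: smooth_fam_has_partials intro: smooth_alg.smooth)
next
  case (const c)
  show ?case using has_partials_const smooth_alg.const by blast
next
  case (add f g)
  then obtain fp ft gp gt where "has_partials I f fp ft" "has_partials I g gp gt"
    "smooth_alg I fp" "smooth_alg I ft" "smooth_alg I gp" "smooth_alg I gt" by blast
  then show ?case by (blast intro: has_partials_add smooth_alg.add)
next
  case (mult f g)
  then obtain fp ft gp gt where fg: "has_partials I f fp ft" "has_partials I g gp gt"
    and "smooth_alg I fp" "smooth_alg I ft" "smooth_alg I gp" "smooth_alg I gt" by blast
  have "smooth_alg I (\<lambda>p t. fp p t * g p t + gp p t * f p t)"
    by (rule smooth_alg.add; rule smooth_alg.mult) fact+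
  moreover have "smooth_alg I (\<lambda>p t. ft p t * g p t + gt p t * f p t)"
    by (rule smooth_alg.add; rule smooth_alg.mult) fact+
  ultimately show ?case using has_partials_mult[OF fg] by blast
next
  case (inverse f)
  then obtain fp ft where f': "has_partials I f fp ft" and "smooth_alg I fp" "smooth_alg I ft"
    by blast
  have "smooth_alg I (\<lambda>p t. (- 1) * h p t * (inverse (f p t) * inverse (f p t)))"
    if "smooth_alg I h" for h
    using that inverse.hyps by (intro smooth_alg.mult smooth_alg.const smooth_alg.inverse)
  then show ?case
    using has_partials_inverse[OF f' inverse.hyps(2)] \<open>smooth_alg I fp\<close> \<open>smooth_alg I ft\<close>
    by blast
next
  case (sqrt f)
  then obtain fp ft where f': "has_partials I f fp ft" and "smooth_alg I fp" "smooth_alg I ft"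
    by blast
  have "smooth_alg I (\<lambda>p t. h p t * sqrt (f p t) * inverse (f p t) * (1/2))"
    if "smooth_alg I h" for h
    using that sqrt.hyps
    by (intro smooth_alg.mult smooth_alg.const smooth_alg.inverse smooth_alg.sqrt)
  then show ?case
    using has_partials_sqrt[OF f' sqrt.hyps(2)] \<open>smooth_alg I fp\<close> \<open>smooth_alg I ft\<close>
    by blast
qed

lemma smooth_alg_imp_smooth_fam: "smooth_alg I f \<Longrightarrow> smooth_fam I f"
proof (coinduction arbitrary: f rule: smooth_fam.coinduct)
  case (smooth_fam f)
  then obtain fp ft where "has_partials I f fp ft" "smooth_alg I fp" "smooth_alg I ft"
    using smooth_alg_has_partials by blast
  with smooth_alg_continuous[OF smooth_fam] show ?case
    by (intro exI[of _ f] exI[of _ fp] exI[of _ ft]) (simp add: has_partials_def)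
qed

lemma smooth_fam_cong:
  assumes "smooth_fam I f" "\<And>p t. t \<in> I \<Longrightarrow> g p t = f p t"
  shows "smooth_fam I g"
  using assms
proof (coinduction arbitrary: f g rule: smooth_fam.coinduct)
  case (smooth_fam f g)
  obtain fp ft where "has_partials I f fp ft" "smooth_fam I fp" "smooth_fam I ft"
    using smooth_fam_has_partials[OF smooth_fam(1)] by blast
  moreover from this(1) have "has_partials I g fp ft"
    by (rule has_partials_cong) (use smooth_fam(2) in blast)
  moreover have "continuous_on (UNIV \<times> I) (\<lambda>(p, t). g p t)"
    using smooth_fam_continuous[OF smooth_fam(1)]
    by (subst continuous_on_cong[OF refl]) (auto simp: smooth_fam(2))
  ultimately show ?case
    unfolding has_partials_def by (intro exI[of _ g] exI[of _ fp] exI[of _ ft]) blast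
qed

lemma smooth_fam_mult:
  "smooth_fam I f \<Longrightarrow> smooth_fam I g \<Longrightarrow> smooth_fam I (\<lambda>p t. f p t * g p t)"
  by (rule smooth_alg_imp_smooth_fam, intro smooth_alg.mult smooth_alg.smooth)

lemma smooth_fam_diff:
  assumes "smooth_fam I f" "smooth_fam I g"
  shows "smooth_fam I (\<lambda>p t. f p t - g p t)"
proof -
  have "smooth_alg I (\<lambda>p t. f p t + (- 1) * g p t)"
    using assms by (intro smooth_alg.add smooth_alg.mult smooth_alg.const smooth_alg.smooth)
  then show ?thesis by (simp add: smooth_alg_imp_smooth_fam)
qed

lemma smooth_fam_divide:
  assumes "smooth_fam I f" "smooth_fam I g" "\<And>p t. t \<in> I \<Longrightarrow> g p t \<noteq> 0"
  shows "smooth_fam I (\<lambda>p t. f p t / g p t)"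
proof -
  have "smooth_alg I (\<lambda>p t. f p t * inverse (g p t))"
    using assms by (intro smooth_alg.mult smooth_alg.inverse smooth_alg.smooth)
  then show ?thesis by (simp add: smooth_alg_imp_smooth_fam divide_inverse)
qed

lemma smooth_fam_sqrt:
  "smooth_fam I f \<Longrightarrow> (\<And>p t. t \<in> I \<Longrightarrow> f p t \<noteq> 0) \<Longrightarrow> smooth_fam I (\<lambda>p t. sqrt (f p t))"
  by (rule smooth_alg_imp_smooth_fam, intro smooth_alg.sqrt smooth_alg.smooth)

lemma smooth_fam_det2:
  "smooth_fam I a \<Longrightarrow> smooth_fam I b \<Longrightarrow> smooth_fam I c \<Longrightarrow> smooth_fam I d \<Longrightarrow>
   smooth_fam I (\<lambda>p t. det2 (a p t) (b p t) (c p t) (d p t))"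
  unfolding det2_def by (intro smooth_fam_diff smooth_fam_mult)

lemma dp_eq_partial: "has_partials I f fp ft \<Longrightarrow> t \<in> I \<Longrightarrow> dp f p t = fp p t"
  unfolding dp_def by (rule DERIV_imp_deriv) (rule has_partialsD)

lemma has_real_derivative_dp:
  assumes "smooth_fam I f" "t \<in> I"
  shows "((\<lambda>q. f q t) has_real_derivative dp f p t) (at p)"
proof -
  obtain fp ft where "has_partials I f fp ft"
    using smooth_fam_has_partials[OF assms(1)] by blast
  with assms(2) show ?thesis
    using has_partialsD(1) dp_eq_partial by simp
qed

lemma smooth_fam_dp:
  assumes "smooth_fam I f"
  shows "smooth_fam I (dp f)"
proof -
  obtain fp ft where partials: "has_partials I f fp ft" and "smooth_fam I fp"
    using smooth_fam_has_partials[OF assms] by blast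
  from \<open>smooth_fam I fp\<close> show ?thesis
    by (rule smooth_fam_cong) (rule dp_eq_partial[OF partials])
qed

lemma has_real_derivative_dt:
  assumes "smooth_fam {0..<T} f" "0 < t" "t < T"
  shows "((\<lambda>s. f p s) has_real_derivative dt T f p t) (at t)"
proof -
  obtain fp ft where partials: "has_partials {0..<T} f fp ft"
    using smooth_fam_has_partials[OF assms(1)] by blast
  have at_t: "at t within {0..<T} = at t"
    using assms(2,3) by (intro at_within_interior) simp
  have "((\<lambda>s. f p s) has_real_derivative ft p t) (at t)"
    using has_partialsD(2)[OF partials, of t p] assms(2,3) by (simp add: at_t)
  moreover from this have "dt T f p t = ft p t"
    unfolding dt_def at_t
    by (intro vector_derivative_at) (simp add: has_real_derivative_iff_has_vector_derivative)
  ultimately show ?thesis by simp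
qed

section \<open>Periodic functions\<close>

definition unit_periodic :: "(real \<Rightarrow> 'a) \<Rightarrow> bool"
  where "unit_periodic g \<longleftrightarrow> (\<forall>x. g (x + 1) = g x)"

lemma unit_periodic_add_int:
  assumes "unit_periodic g"
  shows "g (x + of_int n) = g x"
proof (induction n rule: int_induct[where k = 0])
  case (step1 i)
  then show ?case using assms[unfolded unit_periodic_def, rule_format, of "x + of_int i"]
    by (simp add: add.assoc)
next
  case (step2 i)
  then show ?case using assms[unfolded unit_periodic_def, rule_format, of "x + of_int (i - 1)"]
    by (simp add: add.assoc)
qed simp

lemma unit_periodic_frac: "unit_periodic g \<Longrightarrow> g (frac x) = g x"
  using unit_periodic_add_int[of g "frac x" "\<lfloor>x\<rfloor>"] by (simp add: frac_def)

lemma unit_periodic_range: "unit_periodic g \<Longrightarrow> range g = g ` {0..1}"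
proof
  show "range g \<subseteq> g ` {0..1}" if "unit_periodic g"
  proof
    fix y assume "y \<in> range g"
    then obtain x where "y = g x" by blast
    moreover have "frac x \<in> {0..1}" using frac_lt_1[of x] by simp
    ultimately show "y \<in> g ` {0..1}" using unit_periodic_frac[OF that] by (metis image_eqI)
  qed
qed auto

lemma unit_periodic_deriv:
  fixes g :: "real \<Rightarrow> real"
  assumes "unit_periodic g"
  shows "unit_periodic (deriv g)"
proof -
  have "(g has_real_derivative D) (at (x + 1)) \<longleftrightarrow> (g has_real_derivative D) (at x)" for x D
    using DERIV_shift[of g D x 1] assms by (simp add: unit_periodic_def)
  then show ?thesis by (simp add: unit_periodic_def deriv_def)
qed

lemma unit_periodic_dp: "unit_periodic (\<lambda>q. f q t) \<Longrightarrow> unit_periodic (\<lambda>q. dp f q t)"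
  using unit_periodic_deriv[of "\<lambda>q. f q t"] by (simp add: dp_def[abs_def])

section \<open>A maximum principle for periodic functions\<close>

lemma deriv2_nonpos_at_max:
  fixes f f' :: "real \<Rightarrow> real"
  assumes f': "\<And>x. (f has_real_derivative f' x) (at x)"
    and f'': "(f' has_real_derivative f'') (at a)"
    and max: "\<And>x. f x \<le> f a"
  shows "f'' \<le> 0"
proof (rule ccontr)
  assume "\<not> f'' \<le> 0"
  have "f' a = 0"
    using DERIV_local_max[OF f'[of a] zero_less_one] max by blast
  obtain d where "d > 0" and incr: "\<And>h. 0 < h \<Longrightarrow> h < d \<Longrightarrow> f' a < f' (a + h)"
    using DERIV_pos_inc_right[OF f''] \<open>\<not> f'' \<le> 0\<close> by force
  obtain z where z: "a < z" "z < a + d/2" and mvt: "f (a + d/2) - f a = (a + d/2 - a) * f' z"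
    using MVT2[of a "a + d/2" f f'] f' \<open>d > 0\<close> by auto
  have "0 < f' z" using incr[of "z - a"] z \<open>f' a = 0\<close> by simp
  then have "0 < (a + d/2 - a) * f' z" using \<open>d > 0\<close> by simp
  then have "f a < f (a + d/2)" using mvt by linarith
  with max show False by (meson not_le)
qed

lemma isCont_le_of_less_left:
  fixes g :: "real \<Rightarrow> real"
  assumes "isCont g b" "a < b" "\<And>s. a < s \<Longrightarrow> s < b \<Longrightarrow> g s < c"
  shows "g b \<le> c"
proof (rule tendsto_upperbound)
  show "(g \<longlongrightarrow> g b) (at_left b)"
    using assms(1) by (simp add: isCont_def filterlim_at_split)
  show "\<forall>\<^sub>F s in at_left b. g s \<le> c"
    using eventually_at_left_real[OF assms(2)] by eventually_elim (simp add: assms(3) less_imp_le)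
qed simp

lemma continuous_on_slice:
  assumes "continuous_on (UNIV \<times> I) (\<lambda>(p, t). F p t)" "t \<in> I"
  shows "continuous_on A (\<lambda>q. F q t)"
  by (rule continuous_on_compose2[OF assms(1), of A "\<lambda>q. (q, t)", simplified])
    (use assms(2) in \<open>auto intro!: continuous_intros\<close>)

text \<open>\<^const>\<open>frac\<close> moves every point into the compact window \<open>[0, 1] \<times> [0, t1]\<close>.\<close>

lemma first_time_reaching:
  fixes F :: "real \<Rightarrow> real \<Rightarrow> real"
  assumes cont: "continuous_on (UNIV \<times> {0..t1}) (\<lambda>(p, t). F p t)"
    and per: "\<And>t. 0 \<le> t \<Longrightarrow> t \<le> t1 \<Longrightarrow> unit_periodic (\<lambda>q. F q t)"
    and reach: "c \<le> F p1 t1" "0 \<le> t1"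
  obtains ps ts where "0 \<le> ts" "ts \<le> t1" "c \<le> F ps ts"
    "\<And>q s. 0 \<le> s \<Longrightarrow> s < ts \<Longrightarrow> F q s < c"
proof -
  define K :: "(real \<times> real) set" where "K = {0..1} \<times> {0..t1}"
  define S where "S = {z \<in> K. c \<le> F (fst z) (snd z)}"
  have frac_in_K: "(frac q, s) \<in> K" if "0 \<le> s" "s \<le> t1" for q s
    using that frac_lt_1[of q] by (simp add: K_def)
  have "continuous_on K (\<lambda>z. F (fst z) (snd z))"
    using continuous_on_subset[OF cont, of K] by (auto simp: K_def split_beta')
  then have "closed S"
    unfolding S_def by (rule continuous_on_closed_Collect_le[OF continuous_on_const])
      (simp add: K_def closed_Times)
  then have "compact S"
    using compact_Int_closed[of K S] by (simp add: K_def compact_Times S_def Int_absorb1)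
  moreover have "(frac p1, t1) \<in> S"
    using reach per[of t1] unit_periodic_frac[of "\<lambda>q. F q t1" p1] frac_in_K
    by (simp add: S_def)
  ultimately obtain z where "z \<in> S" and first: "\<And>y. y \<in> S \<Longrightarrow> snd z \<le> snd y"
    using continuous_attains_inf[of S snd] continuous_on_snd[OF continuous_on_id] by blast
  show thesis
  proof
    show "0 \<le> snd z" "snd z \<le> t1" "c \<le> F (fst z) (snd z)"
      using \<open>z \<in> S\<close> by (auto simp: S_def K_def)
    show "F q s < c" if "0 \<le> s" "s < snd z" for q s
    proof (rule ccontr)
      assume "\<not> F q s < c"
      then have "(frac q, s) \<in> S"
        using that \<open>snd z \<le> t1\<close> per[of s] unit_periodic_frac[of "\<lambda>q. F q s" q] frac_in_K
        by (simp add: S_def)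
      with first that show False by fastforce
    qed
  qed
qed

lemma periodic_max_principle:
  fixes F Fp Fpp Ft :: "real \<Rightarrow> real \<Rightarrow> real"
  assumes cont: "continuous_on (UNIV \<times> {0..<T}) (\<lambda>(p, t). F p t)"
    and per: "\<And>t. 0 \<le> t \<Longrightarrow> t < T \<Longrightarrow> unit_periodic (\<lambda>q. F q t)"
    and Fp: "\<And>p t. 0 \<le> t \<Longrightarrow> t < T \<Longrightarrow> ((\<lambda>q. F q t) has_real_derivative Fp p t) (at p)"
    and Fpp: "\<And>p t. 0 \<le> t \<Longrightarrow> t < T \<Longrightarrow> ((\<lambda>q. Fp q t) has_real_derivative Fpp p t) (at p)"
    and Ft: "\<And>p t. 0 < t \<Longrightarrow> t < T \<Longrightarrow> ((\<lambda>s. F p s) has_real_derivative Ft p t) (at t)"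
    and decreasing: "\<And>p t. 0 < t \<Longrightarrow> t < T \<Longrightarrow> a < F p t \<Longrightarrow> Fp p t = 0 \<Longrightarrow>
      Fpp p t \<le> 0 \<Longrightarrow> Ft p t < 0"
    and t1: "0 \<le> t1" "t1 < T"
  shows "F p1 t1 \<le> max a (SUP q. F q 0)"
proof (rule ccontr)
  define c where "c = F p1 t1"
  assume "\<not> F p1 t1 \<le> max a (SUP q. F q 0)"
  then have above: "max a (SUP q. F q 0) < c" unfolding c_def by (rule not_le_imp_less)
  have "compact ((\<lambda>q. F q 0) ` {0..1})"
    using t1 by (intro compact_continuous_image continuous_on_slice[OF cont]) auto
  then have "bdd_above (range (\<lambda>q. F q 0))"
    using unit_periodic_range[OF per[of 0]] t1
    by (simp add: compact_imp_bounded bounded_imp_bdd_above)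
  then have initial: "F q 0 < c" for q
    using cSUP_upper[of q UNIV "\<lambda>q. F q 0"] above by simp
  have cont1: "continuous_on (UNIV \<times> {0..t1}) (\<lambda>(p, t). F p t)"
    by (rule continuous_on_subset[OF cont]) (use t1 in auto)
  have per1: "unit_periodic (\<lambda>q. F q t)" if "0 \<le> t" "t \<le> t1" for t
    using per that t1 by simp
  obtain ps ts where ts: "0 \<le> ts" "ts \<le> t1" and "c \<le> F ps ts"
    and before: "\<And>q s. 0 \<le> s \<Longrightarrow> s < ts \<Longrightarrow> F q s < c"
    by (rule first_time_reaching[OF cont1 per1 _ t1(1), of c p1]) (auto simp: c_def)
  have "ts \<noteq> 0" using \<open>c \<le> F ps ts\<close> initial[of ps] by auto
  with ts t1 have ts_pos: "0 < ts" "ts < T" by auto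
  have below_c: "F q ts \<le> c" for q
    using isCont_le_of_less_left[OF DERIV_isCont[OF Ft[OF ts_pos]] ts_pos(1)] before by simp
  then have at_c: "F ps ts = c"
    using \<open>c \<le> F ps ts\<close> by (simp add: order_antisym)
  have max: "F q ts \<le> F ps ts" for q
    using below_c at_c by simp
  have "Fp ps ts = 0"
    using DERIV_local_max[OF Fp zero_less_one] max ts_pos by auto
  moreover have "Fpp ps ts \<le> 0"
    using deriv2_nonpos_at_max[OF Fp Fpp max] ts_pos by auto
  ultimately have "Ft ps ts < 0"
    using decreasing[OF ts_pos] at_c above by simp
  then obtain d where "0 < d" and dec: "\<And>h. 0 < h \<Longrightarrow> h < d \<Longrightarrow> F ps ts < F ps (ts - h)"
    using DERIV_neg_dec_left[OF Ft[OF ts_pos]] by blast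
  define h where "h = min (d/2) (ts/2)"
  have "0 < h" "h < d" "0 \<le> ts - h" "ts - h < ts"
    using \<open>0 < d\<close> ts_pos by (auto simp: h_def)
  then show False
    using dec[of h] before[of "ts - h" ps] at_c by simp
qed

lemma periodic_min_principle:
  fixes F Fp Fpp Ft :: "real \<Rightarrow> real \<Rightarrow> real"
  assumes cont: "continuous_on (UNIV \<times> {0..<T}) (\<lambda>(p, t). F p t)"
    and per: "\<And>t. 0 \<le> t \<Longrightarrow> t < T \<Longrightarrow> unit_periodic (\<lambda>q. F q t)"
    and Fp: "\<And>p t. 0 \<le> t \<Longrightarrow> t < T \<Longrightarrow> ((\<lambda>q. F q t) has_real_derivative Fp p t) (at p)"
    and Fpp: "\<And>p t. 0 \<le> t \<Longrightarrow> t < T \<Longrightarrow> ((\<lambda>q. Fp q t) has_real_derivative Fpp p t) (at p)"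
    and Ft: "\<And>p t. 0 < t \<Longrightarrow> t < T \<Longrightarrow> ((\<lambda>s. F p s) has_real_derivative Ft p t) (at t)"
    and increasing: "\<And>p t. 0 < t \<Longrightarrow> t < T \<Longrightarrow> F p t < b \<Longrightarrow> Fp p t = 0 \<Longrightarrow>
      0 \<le> Fpp p t \<Longrightarrow> 0 < Ft p t"
    and t1: "0 \<le> t1" "t1 < T"
  shows "min b (INF q. F q 0) \<le> F p1 t1"
proof -
  have "- F p1 t1 \<le> max (- b) (SUP q. - F q 0)"
  proof (rule periodic_max_principle[where Fp = "\<lambda>p t. - Fp p t" and Fpp = "\<lambda>p t. - Fpp p t"
        and Ft = "\<lambda>p t. - Ft p t"])
    show "continuous_on (UNIV \<times> {0..<T}) (\<lambda>(p, t). - F p t)"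
      using continuous_on_minus[OF cont] by (simp add: split_beta')
    show "unit_periodic (\<lambda>q. - F q t)" if "0 \<le> t" "t < T" for t
      using per[OF that] by (simp add: unit_periodic_def)
  qed (use assms in \<open>auto intro!: DERIV_minus\<close>)
  moreover have "(INF q. F q 0) = - (SUP q. - F q 0)"
    by (simp add: Inf_real_def image_image)
  ultimately show ?thesis by linarith
qed

lemma smooth_periodic_max_principle:
  assumes smooth: "smooth_fam {0..<T} F"
    and per: "\<And>t. 0 \<le> t \<Longrightarrow> t < T \<Longrightarrow> unit_periodic (\<lambda>q. F q t)"
    and decreasing: "\<And>p t. 0 < t \<Longrightarrow> t < T \<Longrightarrow> a < F p t \<Longrightarrow> dp F p t = 0 \<Longrightarrow>
      dp (dp F) p t \<le> 0 \<Longrightarrow> dt T F p t < 0"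
    and "0 \<le> t1" "t1 < T"
  shows "F p1 t1 \<le> max a (SUP q. F q 0)"
  using smooth_fam_continuous[OF smooth] per
    has_real_derivative_dp[OF smooth] has_real_derivative_dp[OF smooth_fam_dp[OF smooth]]
    has_real_derivative_dt[OF smooth] decreasing assms(4,5)
  by (rule periodic_max_principle) auto

lemma smooth_periodic_min_principle:
  assumes smooth: "smooth_fam {0..<T} F"
    and per: "\<And>t. 0 \<le> t \<Longrightarrow> t < T \<Longrightarrow> unit_periodic (\<lambda>q. F q t)"
    and increasing: "\<And>p t. 0 < t \<Longrightarrow> t < T \<Longrightarrow> F p t < b \<Longrightarrow> dp F p t = 0 \<Longrightarrow>
      0 \<le> dp (dp F) p t \<Longrightarrow> 0 < dt T F p t"
    and "0 \<le> t1" "t1 < T"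
  shows "min b (INF q. F q 0) \<le> F p1 t1"
  using smooth_fam_continuous[OF smooth] per
    has_real_derivative_dp[OF smooth] has_real_derivative_dp[OF smooth_fam_dp[OF smooth]]
    has_real_derivative_dt[OF smooth] increasing assms(4,5)
  by (rule periodic_min_principle) auto

section \<open>Centro-affine metric and curvature\<close>

lemma ca_metric_nonzero:
  "det2 (x p t) (y p t) (dp x p t) (dp y p t) \<noteq> 0 \<Longrightarrow>
   det2 (dp x p t) (dp y p t) (dp (dp x) p t) (dp (dp y) p t) \<noteq> 0 \<Longrightarrow>
   ca_metric x y p t \<noteq> 0"
  by (simp add: ca_metric_def)

lemma smooth_fam_ca_metric:
  assumes "smooth_fam I x" "smooth_fam I y"
    and "\<And>p t. t \<in> I \<Longrightarrow> det2 (x p t) (y p t) (dp x p t) (dp y p t) \<noteq> 0"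
    and "\<And>p t. t \<in> I \<Longrightarrow> det2 (dp x p t) (dp y p t) (dp (dp x) p t) (dp (dp y) p t) \<noteq> 0"
  shows "smooth_fam I (ca_metric x y)"
proof -
  have "smooth_fam I (\<lambda>p t. sqrt (det2 (dp x p t) (dp y p t) (dp (dp x) p t) (dp (dp y) p t)
      / det2 (x p t) (y p t) (dp x p t) (dp y p t)))"
    using assms by (intro smooth_fam_sqrt smooth_fam_divide smooth_fam_det2 smooth_fam_dp) auto
  then show ?thesis by (simp add: ca_metric_def[abs_def])
qed

lemma smooth_fam_dxi:
  "smooth_fam I f \<Longrightarrow> smooth_fam I (ca_metric x y) \<Longrightarrow>
   (\<And>p t. t \<in> I \<Longrightarrow> ca_metric x y p t \<noteq> 0) \<Longrightarrow> smooth_fam I (dxi x y f)"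
  unfolding dxi_def[abs_def] by (intro smooth_fam_divide smooth_fam_dp)

lemma det2_dxi:
  "ca_metric x y p t \<noteq> 0 \<Longrightarrow>
   det2 (dxi x y x p t) (dxi x y y p t) (x p t) (y p t)
     = - det2 (x p t) (y p t) (dp x p t) (dp y p t) / ca_metric x y p t"
  by (simp add: dxi_def det2_def field_simps)

lemma smooth_fam_ca_curv:
  assumes x: "smooth_fam I x" and y: "smooth_fam I y"
    and nondeg1: "\<And>p t. t \<in> I \<Longrightarrow> det2 (x p t) (y p t) (dp x p t) (dp y p t) \<noteq> 0"
    and nondeg2: "\<And>p t. t \<in> I \<Longrightarrow> det2 (dp x p t) (dp y p t) (dp (dp x) p t) (dp (dp y) p t) \<noteq> 0"
  shows "smooth_fam I (ca_curv x y)"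
proof -
  have metric_nonzero: "ca_metric x y p t \<noteq> 0" if "t \<in> I" for p t
    using ca_metric_nonzero nondeg1 nondeg2 that by blast
  have dxi: "smooth_fam I (dxi x y f)" if "smooth_fam I f" for f
    using that smooth_fam_ca_metric[OF assms] metric_nonzero by (rule smooth_fam_dxi)
  have "det2 (dxi x y x p t) (dxi x y y p t) (x p t) (y p t) \<noteq> 0" if "t \<in> I" for p t
    using det2_dxi[OF metric_nonzero] nondeg1 metric_nonzero that by simp
  then have "smooth_fam I (\<lambda>p t.
      det2 (dxi x y (dxi x y x) p t) (dxi x y (dxi x y y) p t) (x p t) (y p t)
      / det2 (dxi x y x p t) (dxi x y y p t) (x p t) (y p t))"
    using x y by (intro smooth_fam_divide smooth_fam_det2 dxi)
  then show ?thesis by (simp add: ca_curv_def[abs_def])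
qed

lemma unit_periodic_ca_curv:
  assumes "unit_periodic (\<lambda>q. x q t)" "unit_periodic (\<lambda>q. y q t)"
  shows "unit_periodic (\<lambda>q. ca_curv x y q t)"
proof -
  have metric: "unit_periodic (\<lambda>q. ca_metric x y q t)"
    using assms unit_periodic_dp[of x t] unit_periodic_dp[of y t]
      unit_periodic_dp[of "dp x" t] unit_periodic_dp[of "dp y" t]
    by (simp add: unit_periodic_def ca_metric_def)
  have dxi: "unit_periodic (\<lambda>q. dxi x y f q t)" if "unit_periodic (\<lambda>q. f q t)" for f
    using that metric unit_periodic_dp[of f t] by (simp add: unit_periodic_def dxi_def)
  show ?thesis
    using assms dxi[of x] dxi[of y] dxi[of "dxi x y x"] dxi[of "dxi x y y"]
    by (simp add: unit_periodic_def ca_curv_def)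
qed

lemma dxi_dxi_at_critical:
  assumes f: "smooth_fam I f" and metric: "smooth_fam I (ca_metric x y)"
    and "t \<in> I" "ca_metric x y p t \<noteq> 0" "dp f p t = 0"
  shows "dxi x y (dxi x y f) p t = dp (dp f) p t / (ca_metric x y p t)^2"
proof -
  have "((\<lambda>q. dp f q t / ca_metric x y q t) has_real_derivative
      (dp (dp f) p t * ca_metric x y p t - dp f p t * dp (ca_metric x y) p t)
        / (ca_metric x y p t * ca_metric x y p t)) (at p)"
    using has_real_derivative_dp[OF smooth_fam_dp[OF f] \<open>t \<in> I\<close>]
      has_real_derivative_dp[OF metric \<open>t \<in> I\<close>] \<open>ca_metric x y p t \<noteq> 0\<close>
    by (rule DERIV_divide)
  then have "dp (dxi x y f) p t = dp (dp f) p t / ca_metric x y p t"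
    using assms(4,5) by (simp add: dp_def[of "dxi x y f"] dxi_def DERIV_imp_deriv)
  then show ?thesis by (simp add: dxi_def power2_eq_square)
qed

lemma cubic_reaction_neg: "2 < u \<Longrightarrow> - 1/2 * u^3 + 2 * u < (0::real)"
proof -
  assume "2 < u"
  then have "2 * 2 < u * u" by (intro mult_strict_mono) auto
  with \<open>2 < u\<close> have "u * 4 < u * (u * u)" by simp
  then show ?thesis by (simp add: power3_eq_cube)
qed

lemma cubic_reaction_pos: "u < -2 \<Longrightarrow> 0 < - 1/2 * u^3 + 2 * (u::real)"
  using cubic_reaction_neg[of "- u"] by simp

theorem lemma3p2:
  fixes x y :: "real \<Rightarrow> real \<Rightarrow> real" and T :: real
  assumes smooth_x: "smooth_fam {0..<T} x"
    and smooth_y: "smooth_fam {0..<T} y"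
    and closed: "\<And>p t. 0 \<le> t \<Longrightarrow> t < T \<Longrightarrow> x (p + 1) t = x p t \<and> y (p + 1) t = y p t"
    and nondeg1: "\<And>p t. 0 \<le> t \<Longrightarrow> t < T \<Longrightarrow> det2 (x p t) (y p t) (dp x p t) (dp y p t) \<noteq> 0"
    and nondeg2: "\<And>p t. 0 \<le> t \<Longrightarrow> t < T \<Longrightarrow>
                    det2 (dp x p t) (dp y p t) (dp (dp x) p t) (dp (dp y) p t) \<noteq> 0"
    and flow: "\<And>p t. 0 \<le> t \<Longrightarrow> t < T \<Longrightarrow>
       dt T (ca_curv x y) p t
         = 1/2 * dxi x y (dxi x y (ca_curv x y)) p t - 1/2 * (ca_curv x y p t)^3
           + 2 * ca_curv x y p t"
  shows "\<forall>p t. 0 \<le> t \<and> t < T \<longrightarrow>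
           min (-2) (INF q. ca_curv x y q 0) \<le> ca_curv x y p t
           \<and> ca_curv x y p t \<le> max 2 (SUP q. ca_curv x y q 0)"
proof -
  define \<phi> where "\<phi> = ca_curv x y"
  have smooth_metric: "smooth_fam {0..<T} (ca_metric x y)" and smooth: "smooth_fam {0..<T} \<phi>"
    using smooth_fam_ca_metric[OF smooth_x smooth_y] smooth_fam_ca_curv[OF smooth_x smooth_y]
      nondeg1 nondeg2 by (auto simp: \<phi>_def)
  have per: "unit_periodic (\<lambda>q. \<phi> q t)" if "0 \<le> t" "t < T" for t
    using closed[OF that] unit_periodic_ca_curv[of x t y] by (simp add: unit_periodic_def \<phi>_def)
  have speed: "dt T \<phi> p t = 1/2 * dxi x y (dxi x y \<phi>) p t - 1/2 * (\<phi> p t)^3 + 2 * \<phi> p t"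
    if "0 < t" "t < T" for p t
    using flow that by (simp add: \<phi>_def)
  have diffusion: "dxi x y (dxi x y \<phi>) p t = dp (dp \<phi>) p t / (ca_metric x y p t)^2"
    if "0 < t" "t < T" "dp \<phi> p t = 0" for p t
    using dxi_dxi_at_critical[OF smooth smooth_metric] ca_metric_nonzero[OF nondeg1 nondeg2] that
    by simp
  have "dt T \<phi> p t < 0"
    if "0 < t" "t < T" "2 < \<phi> p t" "dp \<phi> p t = 0" "dp (dp \<phi>) p t \<le> 0" for p t
    using speed[where p = p, OF that(1,2)] diffusion[OF that(1,2,4)] cubic_reaction_neg[OF that(3)]
      divide_nonpos_nonneg[OF that(5) zero_le_power2[of "ca_metric x y p t"]]
    by linarith
  moreover have "0 < dt T \<phi> p t"
    if "0 < t" "t < T" "\<phi> p t < -2" "dp \<phi> p t = 0" "0 \<le> dp (dp \<phi>) p t" for p t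
    using speed[where p = p, OF that(1,2)] diffusion[OF that(1,2,4)] cubic_reaction_pos[OF that(3)]
      divide_nonneg_nonneg[OF that(5) zero_le_power2[of "ca_metric x y p t"]]
    by linarith
  ultimately show ?thesis
    using smooth_periodic_max_principle[OF smooth per] smooth_periodic_min_principle[OF smooth per]
    by (simp add: \<phi>_def)
qed

end
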